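(* Let $m\ge 1$ and $n \ge 2m-2$ be integers. Then for every real $r$ with $|r|>1$, $$\int_{-1}^1 \frac{U_n(s)(1-s^2)^{m-\frac{1}{2}}}{s-r}\,ds = \pi(-1)^{m}(r^2-1)^{m-1}\left(r-\frac{|r|}{r}\sqrt{r^2-1}\right)^{n+1}.$$
   Context: $U_k(s)=\frac{\sin((k+1)\cos^{-1}s)}{\sin(\cos^{-1}s)}$ is the Tchebyshev polynomial of the second kind. Since $|r|>1$, the integrand has no singularity on $[-1,1]$ and the integral is an ordinary integral. *)

theory Defs
  imports "HOL-Analysis.Analysis"
begin

text \<open>Chebyshev polynomial of the second kind, defined as in the paper via
  the trigonometric formula (valid on [-1,1]).\<close>
definition chebU :: "nat \<Rightarrow> real \<Rightarrow> real" where
  "chebU k s = sin (real (k + 1) * arccos s) / sin (arccos s)"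

end

theory Submission
  imports Defs
begin

text \<open>Substituting \<open>s = cos t\<close> turns the integral into \<open>I(n+1, 2m-1)\<close>, where
  \<open>I(k, p) = \<integral>\<^sub>0\<^sup>\<pi> sin (k t) sin\<^sup>p t / (cos t - r) dt\<close>.
  Writing \<open>sin\<^sup>2 t = (1 - r\<^sup>2) - (cos t + r)(cos t - r)\<close> gives
  \<open>I(k, p+2) = (1 - r\<^sup>2) I(k, p)\<close> up to integrals \<open>\<integral>\<^sub>0\<^sup>\<pi> sin (l t) sin\<^sup>p t dt\<close>, which vanish
  for odd \<open>p < l\<close> because \<open>sin\<^sup>p\<close> is then a combination of \<open>sin (i t)\<close> with \<open>i \<le> p\<close>.
  So everything reduces to \<open>p = 1\<close>, where \<open>sin ((k+2) t) = 2 cos t sin ((k+1) t) - sin (k t)\<close>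
  yields \<open>I(k+2, 1) = 2 r I(k+1, 1) - I(k, 1)\<close> for \<open>k \<ge> 1\<close>: a linear recurrence whose
  characteristic roots are \<open>\<rho>\<close> and \<open>1/\<rho>\<close>, where \<open>\<rho> = r - sgn r sqrt (r\<^sup>2 - 1)\<close>.
  The initial values \<open>I(1, 1) = -\<pi>\<rho>\<close> and \<open>I(2, 1) = -\<pi>\<rho>\<^sup>2\<close>, obtained from
  \<open>\<integral>\<^sub>0\<^sup>\<pi> dt / (cos t - r) = -sgn r \<pi> / sqrt (r\<^sup>2 - 1)\<close>, force \<open>I(k, 1) = -\<pi>\<rho>\<^sup>k\<close>.\<close>

lemma has_integral_sin_mult_sin:
  assumes "k \<noteq> 1"
  shows "((\<lambda>t. sin (real k * t) * sin t) has_integral 0) {0..pi}"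
proof (cases "k = 0")
  case False
  define a b where "a = real k - 1" and "b = real k + 1"
  have ab: "a > 0" "b > 0" using assms False by (auto simp: a_def b_def)
  let ?F = "\<lambda>t. sin (a * t) / (2 * a) - sin (b * t) / (2 * b)"
  have "((\<lambda>t. sin (real k * t) * sin t) has_integral (?F pi - ?F 0)) {0..pi}"
  proof (rule fundamental_theorem_of_calculus)
    fix t :: real
    have "sin (real k * t) * sin t = cos (a * t) / 2 - cos (b * t) / 2"
      by (simp add: a_def b_def left_diff_distrib distrib_right cos_diff cos_add field_simps)
    then show "(?F has_vector_derivative sin (real k * t) * sin t) (at t within {0..pi})"
      using ab by (auto intro!: derivative_eq_intros
          simp: has_real_derivative_iff_has_vector_derivative[symmetric])
  qed simp
  moreover have "a = real (k - 1)" "b = real (k + 1)"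
    using False by (simp_all add: a_def b_def of_nat_diff)
  then have "sin (a * pi) = 0" "sin (b * pi) = 0"
    by (simp_all only: sin_npi)
  ultimately show ?thesis by simp
qed simp

lemma has_integral_sin_squared: "((\<lambda>t. sin t * sin t) has_integral pi / 2) {0..pi}"
proof -
  let ?F = "\<lambda>t. t / 2 - sin (2 * t) / 4"
  have "((\<lambda>t. sin t * sin t) has_integral (?F pi - ?F 0)) {0..pi}"
  proof (rule fundamental_theorem_of_calculus)
    fix t :: real
    have "sin t * sin t = 1 / 2 - cos (2 * t) / 2"
      unfolding cos_double_sin by (simp add: power2_eq_square field_simps)
    then show "(?F has_vector_derivative sin t * sin t) (at t within {0..pi})"
      by (auto intro!: derivative_eq_intros
          simp: has_real_derivative_iff_has_vector_derivative[symmetric])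
  qed simp
  then show ?thesis by simp
qed

lemma sin_mult_sin_squared:
  fixes x t :: real
  shows "sin x * (sin t)\<^sup>2 = sin x / 2 - sin (x + 2 * t) / 4 - sin (x - 2 * t) / 4"
  unfolding sin_add sin_diff cos_double_sin by (simp add: field_simps)

lemma has_integral_sin_mult_sin_power:
  assumes "odd p" and "p < k"
  shows "((\<lambda>t. sin (real k * t) * sin t ^ p) has_integral 0) {0..pi}"
proof -
  obtain j where "p = 2 * j + 1" using \<open>odd p\<close> by (auto elim: oddE)
  with \<open>p < k\<close> show ?thesis
  proof (induction j arbitrary: k p)
    case 0
    then show ?case using has_integral_sin_mult_sin[of k] by simp
  next
    case (Suc j)
    let ?q = "2 * j + 1"
    have "((\<lambda>t. sin (real k * t) * sin t ^ ?q / 2 - sin (real (k + 2) * t) * sin t ^ ?q / 4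
              - sin (real (k - 2) * t) * sin t ^ ?q / 4) has_integral 0 / 2 - 0 / 4 - 0 / 4) {0..pi}"
      using Suc by (intro has_integral_diff has_integral_divide Suc.IH) auto
    moreover have "sin (real k * t) * sin t ^ p = sin (real k * t) * sin t ^ ?q / 2
        - sin (real (k + 2) * t) * sin t ^ ?q / 4 - sin (real (k - 2) * t) * sin t ^ ?q / 4" for t
    proof -
      have shift: "real (k + 2) * t = real k * t + 2 * t" "real (k - 2) * t = real k * t - 2 * t"
        using Suc.prems by (simp_all add: of_nat_diff algebra_simps)
      have "sin (real k * t) * sin t ^ p = (sin (real k * t) * (sin t)\<^sup>2) * sin t ^ ?q"
        using Suc.prems by (simp add: power2_eq_square)
      also have "\<dots> = (sin (real k * t) / 2 - sin (real k * t + 2 * t) / 4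
          - sin (real k * t - 2 * t) / 4) * sin t ^ ?q"
        by (simp only: sin_mult_sin_squared)
      finally show ?thesis
        unfolding shift by (simp add: algebra_simps)
    qed
    ultimately show ?case by simp
  qed
qed

lemma has_integral_cos_substitution:
  assumes "continuous_on {-1..1} f"
  shows "((\<lambda>t. f (cos t) * sin t) has_integral integral {-1..1} f) {0..pi}"
proof -
  have "((\<lambda>t. (- sin t) *\<^sub>R f (cos t)) has_integral
      (integral {cos 0..cos pi} f - integral {cos pi..cos 0} f)) {0..pi}"
    by (rule has_integral_substitution_general[of "{}" 0 pi cos "-1" 1 f "\<lambda>t. - sin t"])
       (auto intro!: derivative_eq_intros continuous_intros assms)
  from has_integral_neg[OF this] show ?thesis by (simp add: mult.commute)
qed

definition rho :: "real \<Rightarrow> real" where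
  "rho r = r - sgn r * sqrt (r\<^sup>2 - 1)"

definition cauchy_sin_power :: "real \<Rightarrow> nat \<Rightarrow> nat \<Rightarrow> real" where
  "cauchy_sin_power r k p = integral {0..pi} (\<lambda>t. sin (real k * t) * sin t ^ p / (cos t - r))"

lemma cauchy_sin_power_0 [simp]: "cauchy_sin_power r 0 p = 0"
  by (simp add: cauchy_sin_power_def)

context
  fixes r :: real
  assumes r: "\<bar>r\<bar> > 1"
begin

lemma cos_minus_neq_0: "cos t - r \<noteq> 0"
  using r abs_cos_le_one[of t] by linarith

lemma sq_minus_1_pos: "r\<^sup>2 - 1 > 0"
  using r abs_square_le_1[of r] by linarith

lemma sgn_squared: "sgn r * sgn r = 1"
  using r by auto

lemma rho_squared: "(rho r)\<^sup>2 = 2 * r * rho r - 1"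
proof -
  have "sqrt (r\<^sup>2 - 1) * sqrt (r\<^sup>2 - 1) = r\<^sup>2 - 1"
    using sq_minus_1_pos by simp
  then show ?thesis
    unfolding rho_def power2_eq_square
    by (simp add: algebra_simps left_sgn_mult_self_eq) (use r in auto)
qed

lemma abs_minus_eq_sgn_mult: "\<bar>c\<bar> \<le> 1 \<Longrightarrow> \<bar>r - c\<bar> = sgn r * (r - c)"
  using r by (auto simp: abs_if sgn_if)

lemma one_minus_moebius_cos_squared:
  "1 - ((r * cos t - 1) / (r - cos t))\<^sup>2 = (r\<^sup>2 - 1) * (sin t)\<^sup>2 / (r - cos t)\<^sup>2"
proof -
  have "r - cos t \<noteq> 0" using cos_minus_neq_0[of t] by linarith
  then show ?thesis
    by (simp add: field_simps sin_squared_eq) (simp add: power2_eq_square algebra_simps)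
qed

lemma has_real_derivative_arccos_moebius_cos:
  assumes "0 < t" "t < pi"
  shows "((\<lambda>t. arccos ((r * cos t - 1) / (r - cos t))) has_real_derivative
           sgn r * sqrt (r\<^sup>2 - 1) / (r - cos t)) (at t)"
proof -
  define S where "S = sqrt (r\<^sup>2 - 1)"
  define w where "w = (r * cos t - 1) / (r - cos t)"
  have S: "S > 0" "S\<^sup>2 = r\<^sup>2 - 1" using sq_minus_1_pos by (simp_all add: S_def)
  have sin: "sin t > 0" using assms by (simp add: sin_gt_zero)
  have d: "\<bar>r - cos t\<bar> > 0" using cos_minus_neq_0[of t] by simp
  have eq: "1 - w\<^sup>2 = (S * sin t / \<bar>r - cos t\<bar>)\<^sup>2"
    unfolding w_def one_minus_moebius_cos_squared using S by (simp add: power_divide power_mult_distrib)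
  have pos: "S * sin t / \<bar>r - cos t\<bar> > 0" using S sin d by simp
  then have sqrt: "sqrt (1 - w\<^sup>2) = S * sin t / \<bar>r - cos t\<bar>"
    unfolding eq real_sqrt_abs using S sin by simp
  have "w\<^sup>2 < 1" using eq zero_less_power[OF pos, of 2] by linarith
  then have "\<bar>w\<bar> < 1" by (simp add: abs_square_less_1)
  then have "-1 < w" "w < 1" by auto
  then have "((\<lambda>t. arccos ((r * cos t - 1) / (r - cos t))) has_real_derivative
      inverse (- sqrt (1 - w\<^sup>2)) * (sin t * (1 - r\<^sup>2) / (r - cos t)\<^sup>2)) (at t)"
    unfolding w_def using d
    by (auto intro!: derivative_eq_intros DERIV_arccos simp: field_simps power2_eq_square)
  moreover have "inverse (- sqrt (1 - w\<^sup>2)) * (sin t * (1 - r\<^sup>2) / (r - cos t)\<^sup>2)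
      = \<bar>r - cos t\<bar> * S / (r - cos t)\<^sup>2"
  proof -
    have S2: "1 - r\<^sup>2 = - (S * S)" using S by (simp add: power2_eq_square)
    show ?thesis unfolding sqrt S2 using S sin d by (simp add: field_simps)
  qed
  moreover have "\<bar>r - cos t\<bar> * S / (r - cos t)\<^sup>2 = sgn r * S / (r - cos t)"
    unfolding abs_minus_eq_sgn_mult[OF abs_cos_le_one] using d by (simp add: power2_eq_square)
  ultimately show ?thesis by (simp add: S_def)
qed

lemma has_integral_inverse_cos_minus:
  "((\<lambda>t. 1 / (cos t - r)) has_integral - sgn r * pi / sqrt (r\<^sup>2 - 1)) {0..pi}"
proof -
  define S where "S = sqrt (r\<^sup>2 - 1)"
  have S: "S > 0" using sq_minus_1_pos by (simp add: S_def)
  define w where "w = (\<lambda>t. (r * cos t - 1) / (r - cos t))"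
  define F where "F = (\<lambda>t. arccos (w t))"
  have w_bound: "-1 \<le> w t \<and> w t \<le> 1" for t
  proof -
    have "0 \<le> 1 - (w t)\<^sup>2"
      unfolding w_def one_minus_moebius_cos_squared using sq_minus_1_pos by simp
    then have "\<bar>w t\<bar> \<le> 1" by (simp add: abs_square_le_1)
    then show ?thesis by auto
  qed
  have "continuous_on {0..pi} F"
    unfolding F_def w_def using w_bound[unfolded w_def] cos_minus_neq_0
    by (intro continuous_intros) auto
  moreover have "(F has_vector_derivative sgn r * S / (r - cos t)) (at t)" if "t \<in> {0<..<pi}" for t
    using has_real_derivative_arccos_moebius_cos[of t] that
    by (simp add: F_def w_def S_def has_real_derivative_iff_has_vector_derivative)
  ultimately have "((\<lambda>t. sgn r * S / (r - cos t)) has_integral F pi - F 0) {0..pi}"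
    by (intro fundamental_theorem_of_calculus_interior) auto
  moreover have "w 0 = 1" "w pi = -1"
    using cos_minus_neq_0[of 0] cos_minus_neq_0[of pi] by (simp_all add: w_def divide_simps)
  ultimately have "((\<lambda>t. sgn r * S / (r - cos t)) has_integral pi) {0..pi}"
    by (simp add: F_def)
  then have "((\<lambda>t. - sgn r / S * (sgn r * S / (r - cos t))) has_integral - sgn r / S * pi) {0..pi}"
    by (rule has_integral_mult_right)
  moreover have "- sgn r / S * (sgn r * S / (r - cos t)) = 1 / (cos t - r)" for t
    using S sgn_squared cos_minus_neq_0[of t] by (simp add: divide_simps)
  ultimately show ?thesis by (simp add: S_def)
qed

lemma has_integral_cauchy_sin_power:
  "((\<lambda>t. sin (real k * t) * sin t ^ p / (cos t - r)) has_integral cauchy_sin_power r k p) {0..pi}"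
  unfolding cauchy_sin_power_def using cos_minus_neq_0
  by (intro integrable_integral integrable_continuous_interval continuous_intros) auto

lemma cauchy_sin_power_Suc_Suc:
  assumes "((\<lambda>t. sin (real (Suc k) * t) * sin t ^ p) has_integral A) {0..pi}"
  shows "cauchy_sin_power r (Suc (Suc k)) p
           = 2 * A + 2 * r * cauchy_sin_power r (Suc k) p - cauchy_sin_power r k p"
proof -
  have "((\<lambda>t. 2 * (sin (real (Suc k) * t) * sin t ^ p)
            + 2 * r * (sin (real (Suc k) * t) * sin t ^ p / (cos t - r))
            - sin (real k * t) * sin t ^ p / (cos t - r)) has_integral
        2 * A + 2 * r * cauchy_sin_power r (Suc k) p - cauchy_sin_power r k p) {0..pi}"
    by (intro has_integral_diff has_integral_add has_integral_mult_right assms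
        has_integral_cauchy_sin_power)
  moreover have "2 * (sin (real (Suc k) * t) * sin t ^ p)
            + 2 * r * (sin (real (Suc k) * t) * sin t ^ p / (cos t - r))
            - sin (real k * t) * sin t ^ p / (cos t - r)
      = sin (real (Suc (Suc k)) * t) * sin t ^ p / (cos t - r)" for t
  proof -
    have "real (Suc (Suc k)) * t = real (Suc k) * t + t" "real k * t = real (Suc k) * t - t"
      by (simp_all add: algebra_simps)
    then have sin_rec: "sin (real (Suc (Suc k)) * t) = 2 * cos t * sin (real (Suc k) * t) - sin (real k * t)"
      by (simp add: sin_add sin_diff)
    show ?thesis
      unfolding sin_rec using cos_minus_neq_0[of t] by (simp add: divide_simps) (simp add: algebra_simps)
  qed
  ultimately show ?thesis
    unfolding cauchy_sin_power_def[of r "Suc (Suc k)"] by (simp add: integral_unique)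
qed

lemma cauchy_sin_power_add_2:
  assumes "odd p" and "p < k"
  shows "cauchy_sin_power r (Suc k) (p + 2) = (1 - r\<^sup>2) * cauchy_sin_power r (Suc k) p"
proof -
  have "((\<lambda>t. (1 - r\<^sup>2) * (sin (real (Suc k) * t) * sin t ^ p / (cos t - r))
            - r * (sin (real (Suc k) * t) * sin t ^ p)
            - (sin (real (Suc (Suc k)) * t) * sin t ^ p + sin (real k * t) * sin t ^ p) / 2)
        has_integral (1 - r\<^sup>2) * cauchy_sin_power r (Suc k) p - r * 0 - (0 + 0) / 2) {0..pi}"
    using assms
    by (intro has_integral_diff has_integral_mult_right has_integral_divide has_integral_add
        has_integral_cauchy_sin_power has_integral_sin_mult_sin_power) auto
  moreover have "(1 - r\<^sup>2) * (sin (real (Suc k) * t) * sin t ^ p / (cos t - r))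
            - r * (sin (real (Suc k) * t) * sin t ^ p)
            - (sin (real (Suc (Suc k)) * t) * sin t ^ p + sin (real k * t) * sin t ^ p) / 2
      = sin (real (Suc k) * t) * sin t ^ (p + 2) / (cos t - r)" for t
  proof -
    have "real (Suc (Suc k)) * t = real (Suc k) * t + t" "real k * t = real (Suc k) * t - t"
      by (simp_all add: algebra_simps)
    then have "sin (real (Suc (Suc k)) * t) + sin (real k * t) = 2 * cos t * sin (real (Suc k) * t)"
      by (simp add: sin_add sin_diff)
    then have half_sum: "(sin (real (Suc (Suc k)) * t) * sin t ^ p + sin (real k * t) * sin t ^ p) / 2
        = cos t * sin (real (Suc k) * t) * sin t ^ p"
      by (simp flip: distrib_right)
    have power: "sin t ^ (p + 2) = sin t ^ p * (1 - cos t * cos t)"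
      by (simp only: power_add sin_squared_eq) (simp add: power2_eq_square)
    show ?thesis
      unfolding half_sum power using cos_minus_neq_0[of t]
      by (simp add: divide_simps) (simp add: algebra_simps power2_eq_square)
  qed
  ultimately show ?thesis
    unfolding cauchy_sin_power_def[of r "Suc k" "p + 2"] by (simp add: integral_unique)
qed

lemma cauchy_sin_power_1_1: "cauchy_sin_power r 1 1 = - pi * rho r"
proof -
  have "(cos has_integral sin pi - sin 0) {0..pi}"
    by (intro fundamental_theorem_of_calculus)
       (auto intro!: derivative_eq_intros simp flip: has_real_derivative_iff_has_vector_derivative)
  then have "((\<lambda>t. (1 - r\<^sup>2) * (1 / (cos t - r)) - cos t - r) has_integral
      (1 - r\<^sup>2) * (- sgn r * pi / sqrt (r\<^sup>2 - 1)) - 0 - r * pi) {0..pi}"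
    using has_integral_const_real[of r 0 pi]
    by (intro has_integral_diff has_integral_mult_right has_integral_inverse_cos_minus)
       (auto simp: mult.commute)
  moreover have "(1 - r\<^sup>2) * (1 / (cos t - r)) - cos t - r = sin (real 1 * t) * sin t ^ 1 / (cos t - r)" for t
    using cos_minus_neq_0[of t]
    by (simp add: divide_simps) (simp add: sin_squared_eq[symmetric] power2_eq_square algebra_simps)
  moreover have "(1 - r\<^sup>2) * (- sgn r * pi / sqrt (r\<^sup>2 - 1)) - 0 - r * pi = - pi * rho r"
  proof -
    have "1 - r\<^sup>2 = - (sqrt (r\<^sup>2 - 1) * sqrt (r\<^sup>2 - 1))" using sq_minus_1_pos by simp
    then show ?thesis using sq_minus_1_pos by (simp add: rho_def field_simps)
  qed
  ultimately show ?thesis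
    unfolding cauchy_sin_power_def[of r 1 1] by (simp add: integral_unique)
qed

lemma cauchy_sin_power_1: "cauchy_sin_power r (Suc k) 1 = - pi * rho r ^ Suc k"
proof -
  have "cauchy_sin_power r (Suc k) 1 = - pi * rho r ^ Suc k
      \<and> cauchy_sin_power r (Suc (Suc k)) 1 = - pi * rho r ^ Suc (Suc k)"
  proof (induction k)
    case 0
    have "cauchy_sin_power r (Suc (Suc 0)) 1 = 2 * (pi / 2) + 2 * r * (- pi * rho r) - 0"
      using cauchy_sin_power_Suc_Suc[of 0 1 "pi / 2"] has_integral_sin_squared cauchy_sin_power_1_1
      by simp
    also have "\<dots> = - pi * (rho r)\<^sup>2"
      by (simp add: rho_squared algebra_simps)
    finally show ?case using cauchy_sin_power_1_1 by (simp add: power2_eq_square)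
  next
    case (Suc k)
    have "cauchy_sin_power r (Suc (Suc (Suc k))) 1
        = 2 * 0 + 2 * r * (- pi * rho r ^ Suc (Suc k)) - (- pi * rho r ^ Suc k)"
      using Suc.IH cauchy_sin_power_Suc_Suc[of "Suc k" 1 0]
        has_integral_sin_mult_sin_power[of 1 "Suc (Suc k)"]
      by simp
    also have "\<dots> = - pi * rho r ^ Suc k * (2 * r * rho r - 1)"
      by (simp add: algebra_simps)
    also have "\<dots> = - pi * rho r ^ Suc (Suc (Suc k))"
      by (simp flip: rho_squared add: power2_eq_square)
    finally show ?case using Suc.IH by blast
  qed
  then show ?thesis ..
qed

lemma cauchy_sin_power_odd:
  assumes "2 * j \<le> k"
  shows "cauchy_sin_power r (Suc k) (2 * j + 1) = pi * (-1) ^ Suc j * (r\<^sup>2 - 1) ^ j * rho r ^ Suc k"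
  using assms
proof (induction j)
  case 0
  then show ?case using cauchy_sin_power_1[of k] by simp
next
  case (Suc j)
  then have "cauchy_sin_power r (Suc k) (2 * Suc j + 1) = (1 - r\<^sup>2) * cauchy_sin_power r (Suc k) (2 * j + 1)"
    using cauchy_sin_power_add_2[of "2 * j + 1" k] by simp
  with Suc show ?case by (simp add: algebra_simps)
qed

lemma has_integral_cauchy_sin_power_arccos:
  "((\<lambda>s. sin (real k * arccos s) * (1 - s\<^sup>2) ^ j / (s - r)) has_integral
     cauchy_sin_power r k (2 * j + 1)) {-1..1}"
proof -
  define f where "f = (\<lambda>s. sin (real k * arccos s) * (1 - s\<^sup>2) ^ j / (s - r))"
  have cont: "continuous_on {-1..1} f"
    unfolding f_def using r by (intro continuous_intros) auto
  have "f (cos t) * sin t = sin (real k * t) * sin t ^ (2 * j + 1) / (cos t - r)"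
    if "t \<in> {0..pi}" for t
    using that by (simp add: f_def arccos_cos power_mult sin_squared_eq[symmetric])
  from has_integral_cong[THEN iffD1, OF this has_integral_cos_substitution[OF cont]]
  have "((\<lambda>t. sin (real k * t) * sin t ^ (2 * j + 1) / (cos t - r)) has_integral
      integral {-1..1} f) {0..pi}" .
  then have "integral {-1..1} f = cauchy_sin_power r k (2 * j + 1)"
    using has_integral_cauchy_sin_power has_integral_unique by blast
  with cont show ?thesis
    unfolding f_def[symmetric] by (metis integrable_continuous_interval integrable_integral)
qed

end

lemma chebU_mult_powr:
  assumes "-1 < s" and "s < 1"
  shows "chebU n s * (1 - s\<^sup>2) powr (real j + 1/2) = sin (real (Suc n) * arccos s) * (1 - s\<^sup>2) ^ j"
proof -
  have pos: "1 - s\<^sup>2 > 0" using assms by (simp add: abs_square_less_1)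
  then have "(1 - s\<^sup>2) powr (real j + 1/2) = (1 - s\<^sup>2) ^ j * sqrt (1 - s\<^sup>2)"
    by (simp add: powr_add powr_realpow powr_half_sqrt)
  moreover have "sin (arccos s) = sqrt (1 - s\<^sup>2)"
    using assms by (simp add: sin_arccos)
  ultimately show ?thesis
    using pos by (simp add: chebU_def)
qed

theorem mainTheorem10:
  fixes m n :: nat and r :: real
  assumes "m \<ge> 1" and "int n \<ge> 2 * int m - 2" and "\<bar>r\<bar> > 1"
  shows "((\<lambda>s. chebU n s * (1 - s\<^sup>2) powr (real m - 1/2) / (s - r)) has_integral
           (pi * (-1) ^ m * (r\<^sup>2 - 1) ^ (m - 1) * (r - (\<bar>r\<bar> / r) * sqrt (r\<^sup>2 - 1)) ^ (n + 1)))
         {-1..1}"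
proof -
  obtain j where m: "m = Suc j" using \<open>m \<ge> 1\<close> by (cases m) auto
  with assms(2) have "2 * j \<le> n" by simp
  moreover have "rho r = r - (\<bar>r\<bar> / r) * sqrt (r\<^sup>2 - 1)"
    using assms(3) by (simp add: rho_def sgn_if)
  ultimately have arccos_form: "((\<lambda>s. sin (real (Suc n) * arccos s) * (1 - s\<^sup>2) ^ j / (s - r)) has_integral
      pi * (-1) ^ m * (r\<^sup>2 - 1) ^ (m - 1) * (r - (\<bar>r\<bar> / r) * sqrt (r\<^sup>2 - 1)) ^ (n + 1)) {-1..1}"
    using has_integral_cauchy_sin_power_arccos[OF assms(3), of "Suc n" j] cauchy_sin_power_odd[OF assms(3)]
    by (simp add: m)
  have integrands_eq: "chebU n s * (1 - s\<^sup>2) powr (real m - 1/2) / (s - r)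
      = sin (real (Suc n) * arccos s) * (1 - s\<^sup>2) ^ j / (s - r)" if "s \<in> {-1..1} - {-1, 1}" for s
  proof -
    have "real m - 1/2 = real j + 1/2" by (simp add: m)
    moreover have "-1 < s" "s < 1" using that by auto
    ultimately have "chebU n s * (1 - s\<^sup>2) powr (real m - 1/2) = sin (real (Suc n) * arccos s) * (1 - s\<^sup>2) ^ j"
      using chebU_mult_powr by presburger
    then show ?thesis by simp
  qed
  show ?thesis
    by (rule has_integral_spike_finite[of "{-1, 1}", OF _ integrands_eq arccos_form]) simp
qed
end
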